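(* In a dynamic network congestion game, a strategy profile is a subgame-perfect equilibrium if, and only if, it is a very-weak subgame-perfect equilibrium.
   Context: An arena is $\mathcal A=(V,E,\mathsf{src},\mathsf{tgt})$ with $V$ finite, $E$ a partial function from $V\times V$ to non-decreasing piecewise-affine functions $\mathbb N\to\mathbb N$ (edge $e$ has cost function $\ell_e$); $\mathsf{tgt}$ has only a self-loop of constant cost $0$ and is reachable from every state. In the dynamic NCG $(\mathcal A,n)$, players $[n]$ start in $\mathsf{src}$; configurations are maps $[n]\to V$; in each step each player simultaneously picks an edge leaving their current state, moves along it and pays $\ell_e(u)$, $u$ being the number of players using edge $e$ in that step. A history is a finite sequence of such steps; a strategy maps histories to edges leaving the player's current state. For a profile $\sigma$ and a history $h$, the residual profile $\sigma^h$ (played from the last configuration of $h$) is given by $\sigma^h_i(h')=\sigma_i(h\cdot h')$; $\mathrm{cost}_i$ of a profile is player $i$'s total payment along its outcome until reaching $\mathsf{tgt}$ ($+\infty$ if never). A Nash equilibrium is a profile in which no player can lower their cost by a unilateral change of strategy; a subgame-perfect equilibrium is a profile $\sigma$ such that $\sigma^h$ is a Nash equilibrium for every history $h$. A strategy $\sigma'_i$ is first-shot deviating from $\sigma_i$ if they coincide on all histories except the empty (trivial) history. A profile $\sigma$ is a very-weak Nash equilibrium if for every player $i$ and every $\sigma'_i$ first-shot deviating from $\sigma_i$, $\mathrm{cost}_i(\langle\sigma_{-i},\sigma'_i\rangle)\ge\mathrm{cost}_i(\sigma)$. A very-weak subgame-perfect equilibrium is a profile $\sigma$ such that $\sigma^h$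 is a very-weak Nash equilibrium for every history $h$. *)

theory Defs
  imports Main "HOL-Library.Extended_Nat"
begin

definition piecewise_affine :: "(nat \<Rightarrow> nat) \<Rightarrow> bool" where
  "piecewise_affine f \<longleftrightarrow>
     (\<exists>ts :: nat list. \<exists>a b :: nat \<Rightarrow> real. sorted ts \<and> distinct ts \<and>
        (\<forall>x. real (f x) = a (card {t \<in> set ts. t \<le> x}) * real x + b (card {t \<in> set ts. t \<le> x})))"

record 'v arena =
  verts :: "'v set"
  edges :: "'v \<Rightarrow> 'v \<Rightarrow> (nat \<Rightarrow> nat) option"
  src :: 'v
  tgt :: 'v

definition is_arena :: "'v arena \<Rightarrow> bool" where
  "is_arena A \<longleftrightarrow>
     finite (verts A) \<and> src A \<in> verts A \<and> tgt A \<in> verts A \<and>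
     (\<forall>u v. edges A u v \<noteq> None \<longrightarrow> u \<in> verts A \<and> v \<in> verts A) \<and>
     (\<forall>u v l. edges A u v = Some l \<longrightarrow> mono l \<and> piecewise_affine l) \<and>
     edges A (tgt A) (tgt A) = Some (\<lambda>_. 0) \<and>
     (\<forall>v. v \<noteq> tgt A \<longrightarrow> edges A (tgt A) v = None) \<and>
     (\<forall>v \<in> verts A. (v, tgt A) \<in> {(u, w). edges A u w \<noteq> None}\<^sup>*)"

text \<open>Players are 0..<n. A configuration is a list of length n (position of each player).
  Since E is a partial function on V x V, a step is determined by the configuration
  reached; a history is the list of configurations reached after each step (starting
  from a given configuration c). A strategy maps histories to the next vertex, i.e.
  to the edge (current vertex, next vertex).\<close>

type_synonym 'v config = "'v list"
type_synonym 'v history = "'v config list"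
type_synonym 'v strategy = "'v history \<Rightarrow> 'v"
type_synonym 'v profile = "nat \<Rightarrow> 'v strategy"

definition init_config :: "'v arena \<Rightarrow> nat \<Rightarrow> 'v config" where
  "init_config A n = replicate n (src A)"

definition valid_history :: "'v arena \<Rightarrow> nat \<Rightarrow> 'v config \<Rightarrow> 'v history \<Rightarrow> bool" where
  "valid_history A n c h \<longleftrightarrow>
     (\<forall>k < length h. length (h ! k) = n \<and>
        (\<forall>j < n. edges A (((c # h) ! k) ! j) ((h ! k) ! j) \<noteq> None))"

definition is_strategy :: "'v arena \<Rightarrow> nat \<Rightarrow> 'v config \<Rightarrow> nat \<Rightarrow> 'v strategy \<Rightarrow> bool" where
  "is_strategy A n c i s \<longleftrightarrow>
     (\<forall>h. valid_history A n c h \<longrightarrow> edges A (last (c # h) ! i) (s h) \<noteq> None)"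

definition is_profile :: "'v arena \<Rightarrow> nat \<Rightarrow> 'v config \<Rightarrow> 'v profile \<Rightarrow> bool" where
  "is_profile A n c \<sigma> \<longleftrightarrow> (\<forall>i < n. is_strategy A n c i (\<sigma> i))"

primrec play_hist :: "nat \<Rightarrow> 'v profile \<Rightarrow> nat \<Rightarrow> 'v history" where
  "play_hist n \<sigma> 0 = []"
| "play_hist n \<sigma> (Suc k) = play_hist n \<sigma> k @ [map (\<lambda>i. \<sigma> i (play_hist n \<sigma> k)) [0..<n]]"

definition conf :: "nat \<Rightarrow> 'v profile \<Rightarrow> 'v config \<Rightarrow> nat \<Rightarrow> 'v config" where
  "conf n \<sigma> c k = last (c # play_hist n \<sigma> k)"

definition pay :: "'v arena \<Rightarrow> nat \<Rightarrow> 'v config \<Rightarrow> 'v profile \<Rightarrow> nat \<Rightarrow> nat \<Rightarrow> nat" where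
  "pay A n c \<sigma> i k =
     (let p = conf n \<sigma> c k; q = conf n \<sigma> c (Suc k) in
      case edges A (p ! i) (q ! i) of
        Some l \<Rightarrow> l (card {j. j < n \<and> p ! j = p ! i \<and> q ! j = q ! i})
      | None \<Rightarrow> 0)"

definition cost :: "'v arena \<Rightarrow> nat \<Rightarrow> 'v config \<Rightarrow> 'v profile \<Rightarrow> nat \<Rightarrow> enat" where
  "cost A n c \<sigma> i =
     (if \<exists>k. conf n \<sigma> c k ! i = tgt A
      then enat (\<Sum>k < (LEAST k. conf n \<sigma> c k ! i = tgt A). pay A n c \<sigma> i k)
      else \<infinity>)"

definition residual :: "'v profile \<Rightarrow> 'v history \<Rightarrow> 'v profile" where
  "residual \<sigma> h = (\<lambda>i h'. \<sigma> i (h @ h'))"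

definition is_NE :: "'v arena \<Rightarrow> nat \<Rightarrow> 'v config \<Rightarrow> 'v profile \<Rightarrow> bool" where
  "is_NE A n c \<sigma> \<longleftrightarrow>
     (\<forall>i < n. \<forall>s. is_strategy A n c i s \<longrightarrow> cost A n c \<sigma> i \<le> cost A n c (\<sigma>(i := s)) i)"

definition first_shot_deviating :: "'v strategy \<Rightarrow> 'v strategy \<Rightarrow> bool" where
  "first_shot_deviating s' s \<longleftrightarrow> (\<forall>h. h \<noteq> [] \<longrightarrow> s' h = s h)"

definition is_VWNE :: "'v arena \<Rightarrow> nat \<Rightarrow> 'v config \<Rightarrow> 'v profile \<Rightarrow> bool" where
  "is_VWNE A n c \<sigma> \<longleftrightarrow>
     (\<forall>i < n. \<forall>s. is_strategy A n c i s \<and> first_shot_deviating s (\<sigma> i) \<longrightarrow>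
        cost A n c \<sigma> i \<le> cost A n c (\<sigma>(i := s)) i)"

definition is_SPE :: "'v arena \<Rightarrow> nat \<Rightarrow> 'v profile \<Rightarrow> bool" where
  "is_SPE A n \<sigma> \<longleftrightarrow>
     (\<forall>h. valid_history A n (init_config A n) h \<longrightarrow>
        is_NE A n (last (init_config A n # h)) (residual \<sigma> h))"

definition is_VWSPE :: "'v arena \<Rightarrow> nat \<Rightarrow> 'v profile \<Rightarrow> bool" where
  "is_VWSPE A n \<sigma> \<longleftrightarrow>
     (\<forall>h. valid_history A n (init_config A n) h \<longrightarrow>
        is_VWNE A n (last (init_config A n # h)) (residual \<sigma> h))"

end

theory Submission
  imports Defs
begin

text \<open>A deviation of finite cost reaches the target after finitely many steps, so it may be
  assumed to agree with the profile on all histories of length at least m. Induction on m: by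
  induction in the subgame after the first step, the deviation is no better than deviating in
  the first step only, and such a first-shot deviation is not profitable because the profile is
  a very-weak equilibrium of every subgame.\<close>

abbreviation first_step :: "nat \<Rightarrow> 'v profile \<Rightarrow> 'v config" where
  "first_step n P \<equiv> map (\<lambda>j. P j []) [0..<n]"

lemma length_play_hist [simp]: "length (play_hist n P k) = k"
  by (induction k) auto

lemma conf_0 [simp]: "conf n P c 0 = c"
  by (simp add: conf_def)

lemma residual_Nil [simp]: "residual P [] = P"
  by (simp add: residual_def)

lemma residual_residual [simp]: "residual (residual P g) h = residual P (g @ h)"
  by (simp add: residual_def)

lemma residual_fun_upd: "residual (P(i := s)) g = (residual P g)(i := (\<lambda>h. s (g @ h)))"
  by (auto simp: residual_def)

lemma play_hist_cong:
  assumes "\<And>j h. length h < L \<Longrightarrow> P j h = Q j h" and "k \<le> L"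
  shows "play_hist n P k = play_hist n Q k"
  using assms(2) by (induction k) (simp_all add: assms(1))

lemma conf_cong:
  assumes "\<And>j h. length h < L \<Longrightarrow> P j h = Q j h" and "k \<le> L"
  shows "conf n P c k = conf n Q c k"
  using play_hist_cong[OF assms] by (simp add: conf_def)

lemma pay_cong:
  assumes "\<And>j h. length h < L \<Longrightarrow> P j h = Q j h" and "k < L"
  shows "pay A n c P i k = pay A n c Q i k"
  using conf_cong[OF assms(1), of k] conf_cong[OF assms(1), of "Suc k"] assms(2)
  by (simp add: pay_def)

lemma cost_cong_until_arrival:
  assumes arrives: "\<exists>k. conf n P c k ! i = tgt A"
    and L: "L = (LEAST k. conf n P c k ! i = tgt A)"
    and agree: "\<And>j h. length h < L \<Longrightarrow> P j h = Q j h"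
  shows "cost A n c P i = cost A n c Q i"
proof -
  have same_conf: "conf n P c k = conf n Q c k" if "k \<le> L" for k
    using conf_cong[OF agree that] .
  have P_at_L: "conf n P c L ! i = tgt A"
    unfolding L by (rule LeastI_ex[OF arrives])
  have Q_at_L: "conf n Q c L ! i = tgt A"
    using P_at_L same_conf by simp
  have "(LEAST k. conf n Q c k ! i = tgt A) = L"
  proof (rule Least_equality)
    fix k assume Q_at_k: "conf n Q c k ! i = tgt A"
    show "L \<le> k"
    proof (rule ccontr)
      assume "\<not> L \<le> k"
      with Q_at_k same_conf[of k] have "conf n P c k ! i = tgt A" by simp
      with \<open>\<not> L \<le> k\<close> show False
        unfolding L by (meson Least_le)
    qed
  qed (fact Q_at_L)
  moreover have "(\<Sum>k<L. pay A n c P i k) = (\<Sum>k<L. pay A n c Q i k)"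
    using pay_cong[OF agree] by simp
  ultimately show ?thesis
    using arrives Q_at_L unfolding cost_def L[symmetric] by auto
qed

lemma play_hist_Suc_shift:
  "play_hist n P (Suc k) = first_step n P # play_hist n (residual P [first_step n P]) k"
  by (induction k) (auto simp: residual_def)

lemma conf_Suc_shift:
  "conf n P c (Suc k) = conf n (residual P [first_step n P]) (first_step n P) k"
  unfolding conf_def by (simp only: play_hist_Suc_shift) simp

lemma pay_Suc_shift:
  "pay A n c P i (Suc k) = pay A n (first_step n P) (residual P [first_step n P]) i k"
  unfolding pay_def by (simp only: conf_Suc_shift)

lemma cost_at_tgt:
  assumes "c ! i = tgt A"
  shows "cost A n c P i = 0"
proof -
  have "(LEAST k. conf n P c k ! i = tgt A) = 0"
    using assms by (intro Least_eq_0) simp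
  moreover have "\<exists>k. conf n P c k ! i = tgt A"
    using assms by (intro exI[of _ 0]) simp
  ultimately show ?thesis
    by (simp add: cost_def flip: zero_enat_def)
qed

lemma cost_unfold:
  assumes "c ! i \<noteq> tgt A"
  shows "cost A n c P i =
    enat (pay A n c P i 0) + cost A n (first_step n P) (residual P [first_step n P]) i"
proof -
  define x where "x = first_step n P"
  define Q where "Q = residual P [x]"
  have arrival_shift: "conf n P c (Suc k) ! i = tgt A \<longleftrightarrow> conf n Q x k ! i = tgt A" for k
    by (simp add: conf_Suc_shift x_def Q_def)
  have arrives_iff: "(\<exists>k. conf n P c k ! i = tgt A) \<longleftrightarrow> (\<exists>k. conf n Q x k ! i = tgt A)"
  proof
    assume "\<exists>k. conf n P c k ! i = tgt A"
    then obtain k where k: "conf n P c k ! i = tgt A" ..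
    with assms obtain k' where "k = Suc k'"
      by (cases k) auto
    with k arrival_shift show "\<exists>k. conf n Q x k ! i = tgt A"
      by blast
  qed (use arrival_shift in blast)
  have "cost A n c P i = enat (pay A n c P i 0) + cost A n x Q i"
  proof (cases "\<exists>k. conf n Q x k ! i = tgt A")
    case True
    define L where "L = (LEAST k. conf n Q x k ! i = tgt A)"
    obtain k where "conf n P c k ! i = tgt A"
      using True arrives_iff by blast
    then have "(LEAST k. conf n P c k ! i = tgt A) = Suc L"
      unfolding L_def using assms arrival_shift by (subst Least_Suc) auto
    then have "cost A n c P i = enat (\<Sum>k<Suc L. pay A n c P i k)"
      using True arrives_iff by (simp add: cost_def)
    also have "\<dots> = enat (pay A n c P i 0 + (\<Sum>k<L. pay A n x Q i k))"
      unfolding x_def Q_def by (simp only: sum.lessThan_Suc_shift pay_Suc_shift)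
    also have "\<dots> = enat (pay A n c P i 0) + cost A n x Q i"
      using True unfolding cost_def L_def[symmetric] by simp
    finally show ?thesis .
  next
    case False
    then show ?thesis
      using arrives_iff by (simp add: cost_def)
  qed
  then show ?thesis
    unfolding x_def Q_def .
qed

lemma valid_history_Cons:
  "valid_history A n c (x # h) \<longleftrightarrow>
     length x = n \<and> (\<forall>j<n. edges A (c ! j) (x ! j) \<noteq> None) \<and> valid_history A n x h"
  unfolding valid_history_def
  by (simp only: length_Cons All_less_Suc2 nth_Cons_0 nth_Cons_Suc) blast

lemma valid_history_Nil [simp]: "valid_history A n c []"
  by (simp add: valid_history_def)

lemma valid_history_append:
  "valid_history A n c (g @ h) \<longleftrightarrow> valid_history A n c g \<and> valid_history A n (last (c # g)) h"
  by (induction g arbitrary: c) (auto simp: valid_history_Cons)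

lemma last_Cons_append: "last (c # g @ h) = last (last (c # g) # h)"
  by (induction g arbitrary: c) auto

lemma is_strategy_pointwise_choice:
  assumes "is_strategy A n c i s" and "is_strategy A n c i t" and "\<And>h. u h = s h \<or> u h = t h"
  shows "is_strategy A n c i u"
  using assms unfolding is_strategy_def by metis

lemma is_profile_fun_upd:
  "is_profile A n c P \<Longrightarrow> is_strategy A n c i s \<Longrightarrow> is_profile A n c (P(i := s))"
  by (simp add: is_profile_def)

lemma is_profile_residual:
  assumes "is_profile A n c P" and "valid_history A n c g"
  shows "is_profile A n (last (c # g)) (residual P g)"
  unfolding is_profile_def is_strategy_def
proof (intro allI impI)
  fix j h assume "j < n" and "valid_history A n (last (c # g)) h"
  then have "edges A (last (c # g @ h) ! j) (P j (g @ h)) \<noteq> None"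
    using assms valid_history_append unfolding is_profile_def is_strategy_def by blast
  then show "edges A (last (last (c # g) # h) ! j) (residual P g j h) \<noteq> None"
    by (subst (asm) last_Cons_append) (simp add: residual_def)
qed

lemma valid_history_first_step:
  assumes "is_profile A n c P"
  shows "valid_history A n c [first_step n P]"
proof -
  have "edges A (c ! j) (P j []) \<noteq> None" if "j < n" for j
    using assms that valid_history_Nil unfolding is_profile_def is_strategy_def by fastforce
  then show ?thesis
    by (simp add: valid_history_Cons)
qed

definition VWNE_in_all_subgames :: "'v arena \<Rightarrow> nat \<Rightarrow> 'v config \<Rightarrow> 'v profile \<Rightarrow> bool" where
  "VWNE_in_all_subgames A n c P \<longleftrightarrow>
     (\<forall>h. valid_history A n c h \<longrightarrow> is_VWNE A n (last (c # h)) (residual P h))"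

lemma is_VWSPE_iff_VWNE_in_all_subgames:
  "is_VWSPE A n \<sigma> \<longleftrightarrow> VWNE_in_all_subgames A n (init_config A n) \<sigma>"
  by (simp add: is_VWSPE_def VWNE_in_all_subgames_def)

lemma VWNE_in_all_subgames_residual:
  assumes "VWNE_in_all_subgames A n c P" and "valid_history A n c g"
  shows "VWNE_in_all_subgames A n (last (c # g)) (residual P g)"
  unfolding VWNE_in_all_subgames_def
proof (intro allI impI)
  fix h assume "valid_history A n (last (c # g)) h"
  then have "is_VWNE A n (last (c # g @ h)) (residual P (g @ h))"
    using assms valid_history_append unfolding VWNE_in_all_subgames_def by blast
  then show "is_VWNE A n (last (last (c # g) # h)) (residual (residual P g) h)"
    by (subst (asm) last_Cons_append) simp
qed

lemma cost_le_deviation_agreeing_eventually: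
  assumes "is_profile A n c P" and "VWNE_in_all_subgames A n c P"
    and "i < n" and "is_strategy A n c i s"
    and "\<forall>h. m \<le> length h \<longrightarrow> s h = P i h"
  shows "cost A n c P i \<le> cost A n c (P(i := s)) i"
  using assms
proof (induction m arbitrary: c P s)
  case 0
  then have "s = P i" by auto
  then show ?case by simp
next
  case (Suc m)
  show ?case
  proof (cases "c ! i = tgt A")
    case True
    then show ?thesis by (simp add: cost_at_tgt)
  next
    case False
    define x where "x = first_step n (P(i := s))"
    define s_first where "s_first = (\<lambda>h. if h = [] then s [] else P i h)"
    define s_tail where "s_tail = (\<lambda>h. s (x # h))"
    have "is_profile A n c (P(i := s))"
      using Suc.prems by (simp add: is_profile_fun_upd)
    then have x_valid: "valid_history A n c [x]"
      unfolding x_def by (rule valid_history_first_step)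
    have P_i: "is_strategy A n c i (P i)"
      using Suc.prems unfolding is_profile_def by blast
    have first_shot: "first_shot_deviating s_first (P i)"
      by (simp add: first_shot_deviating_def s_first_def)
    have s_first_strategy: "is_strategy A n c i s_first"
      using Suc.prems(4) P_i by (rule is_strategy_pointwise_choice) (simp add: s_first_def)
    have x_s_first: "first_step n (P(i := s_first)) = x"
      by (simp add: x_def s_first_def)
    have "is_strategy A n x i (residual (P(i := s)) [x] i)"
      using is_profile_residual[OF \<open>is_profile A n c (P(i := s))\<close> x_valid] Suc.prems(3)
      unfolding is_profile_def by simp
    then have "is_strategy A n x i s_tail"
      by (simp add: residual_def s_tail_def)
    moreover have "is_profile A n x (residual P [x])"
      using is_profile_residual[OF Suc.prems(1) x_valid] by simp
    moreover have "VWNE_in_all_subgames A n x (residual P [x])"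
      using VWNE_in_all_subgames_residual[OF Suc.prems(2) x_valid] by simp
    moreover have "\<forall>h. m \<le> length h \<longrightarrow> s_tail h = residual P [x] i h"
      using Suc.prems(5) by (simp add: s_tail_def residual_def)
    ultimately have tail_le:
      "cost A n x (residual P [x]) i \<le> cost A n x ((residual P [x])(i := s_tail)) i"
      using Suc.IH Suc.prems(3) by blast
    have residual_s_first: "residual (P(i := s_first)) [x] = residual P [x]"
      by (simp add: residual_def s_first_def fun_eq_iff)
    have residual_s: "residual (P(i := s)) [x] = (residual P [x])(i := s_tail)"
      by (simp add: residual_fun_upd s_tail_def)
    have same_first_pay: "pay A n c (P(i := s_first)) i 0 = pay A n c (P(i := s)) i 0"
      by (rule pay_cong[where L = 1]) (simp_all add: s_first_def)
    have "cost A n c P i \<le> cost A n c (P(i := s_first)) i"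
      using Suc.prems(2,3) s_first_strategy first_shot
      unfolding VWNE_in_all_subgames_def is_VWNE_def
      by (metis last_ConsL residual_Nil valid_history_Nil)
    also have "\<dots> = enat (pay A n c (P(i := s)) i 0) + cost A n x (residual P [x]) i"
      using cost_unfold[OF False, of n "P(i := s_first)"] unfolding x_s_first residual_s_first same_first_pay .
    also have "\<dots> \<le> enat (pay A n c (P(i := s)) i 0) + cost A n x ((residual P [x])(i := s_tail)) i"
      using tail_le by (rule add_left_mono)
    also have "\<dots> = cost A n c (P(i := s)) i"
      using cost_unfold[OF False, of n "P(i := s)"] unfolding x_def[symmetric] residual_s ..
    finally show ?thesis .
  qed
qed

lemma is_NE_if_VWNE_in_all_subgames:
  assumes profile: "is_profile A n c P" and VW: "VWNE_in_all_subgames A n c P"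
  shows "is_NE A n c P"
  unfolding is_NE_def
proof (intro allI impI)
  fix i s assume i: "i < n" and s: "is_strategy A n c i s"
  show "cost A n c P i \<le> cost A n c (P(i := s)) i"
  proof (cases "\<exists>k. conf n (P(i := s)) c k ! i = tgt A")
    case False
    then show ?thesis by (simp add: cost_def)
  next
    case True
    define L where "L = (LEAST k. conf n (P(i := s)) c k ! i = tgt A)"
    define t where "t = (\<lambda>h. if length h < L then s h else P i h)"
    have same_cost: "cost A n c (P(i := s)) i = cost A n c (P(i := t)) i"
      using True L_def by (rule cost_cong_until_arrival) (simp add: t_def)
    have "is_strategy A n c i (P i)"
      using profile i unfolding is_profile_def by blast
    with s have "is_strategy A n c i t"
      by (rule is_strategy_pointwise_choice) (simp add: t_def)
    moreover have "\<forall>h. L \<le> length h \<longrightarrow> t h = P i h"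
      by (simp add: t_def)
    ultimately show ?thesis
      using cost_le_deviation_agreeing_eventually[OF profile VW i] same_cost by simp
  qed
qed

lemma is_VWNE_if_is_NE: "is_NE A n c P \<Longrightarrow> is_VWNE A n c P"
  by (simp add: is_NE_def is_VWNE_def)

theorem theoremC3:
  fixes A :: "'v arena" and n :: nat and \<sigma> :: "'v profile"
  assumes "is_arena A"
    and "is_profile A n (init_config A n) \<sigma>"
  shows "is_SPE A n \<sigma> \<longleftrightarrow> is_VWSPE A n \<sigma>"
proof
  assume "is_SPE A n \<sigma>"
  then show "is_VWSPE A n \<sigma>"
    by (simp add: is_SPE_def is_VWSPE_def is_VWNE_if_is_NE)
next
  assume "is_VWSPE A n \<sigma>"
  then have VW: "VWNE_in_all_subgames A n (init_config A n) \<sigma>"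
    by (simp add: is_VWSPE_iff_VWNE_in_all_subgames)
  show "is_SPE A n \<sigma>"
    unfolding is_SPE_def
  proof (intro allI impI)
    fix g assume "valid_history A n (init_config A n) g"
    with assms(2) VW show "is_NE A n (last (init_config A n # g)) (residual \<sigma> g)"
      by (intro is_NE_if_VWNE_in_all_subgames is_profile_residual VWNE_in_all_subgames_residual)
  qed
qed

end
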